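(* Let $\Omega\subseteq\mathbb{F}$ be a P-closed set with finite P-basis $\mathcal{B}$, $n=\mathrm{Rk}(\Omega)$. For any $F\in\mathbb{F}[x;\sigma,\delta]_n$, $$\mathrm{wt}_\Omega(F)=\min\{\mathrm{wt_H}(E_\mathcal{A}(F)) : \mathcal{A}\text{ is a P-basis of }\Omega\}\le \mathrm{wt_H}(E_\mathcal{B}(F)),$$ equivalently, for $f\in\mathbb{F}^\mathcal{B}$, $\mathrm{wt}_\mathcal{B}(f)=\min\{\mathrm{wt_H}(\pi_{\mathcal{B},\mathcal{A}}(f)):\mathcal{A}\text{ a P-basis of }\Omega\}\le\mathrm{wt_H}(f)$.
   Context: $\mathbb{F}$ is a division ring, $\sigma$ a ring endomorphism of $\mathbb{F}$, $\delta$ a $\sigma$-derivation ($\delta$ additive, $\delta(ab)=\sigma(a)\delta(b)+\delta(a)b$). $\mathbb{F}[x;\sigma,\delta]$ is the skew polynomial ring (left $\mathbb{F}$-space with basis $x^i$, $xa=\sigma(a)x+\delta(a)$); $\mathbb{F}[x;\sigma,\delta]_n$ are those of degree $<n$. Evaluation: $F(a)$ is the unique element with $F-F(a)\in\mathbb{F}[x;\sigma,\delta](x-a)$; $E_\Omega(F)\in\mathbb{F}^\Omega$ is $a\mapsto F(a)$. $Z(A)$ is the set of common zeros of $A$, $I(\Omega)$ the left ideal of polynomials vanishing on $\Omega$, generated by its monic minimal-degree element $F_\Omega$; $\overline{\Omega}=Z(I(\Omega))$ is the P-closure, $\Omega$ is P-closed if $\overline\Omega=\Omega$, P-independent if no $a\in\Omega$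 lies in $\overline{\Omega\setminus\{a\}}$; a P-basis of a P-closed $\Omega$ is a P-independent generating subset. $\mathrm{Rk}(\Omega)=\deg F_\Omega$ equals the size of any P-basis. For a P-basis $\mathcal{B}$ with $n$ elements, $E_\mathcal{B}:\mathbb{F}[x;\sigma,\delta]_n\to\mathbb{F}^\mathcal{B}$ is bijective. Skew weight: $\mathrm{wt}_\Omega(F)=n-\mathrm{Rk}(Z(F)\cap\Omega)$ for $\deg F<n$, and $\mathrm{wt}_\mathcal{B}(E_\mathcal{B}(F))=\mathrm{wt}_\Omega(F)$. $\pi_{\mathcal{B},\mathcal{A}}(E_\mathcal{B}(F))=E_\mathcal{A}(F)$. For $f\in\mathbb{F}^\mathcal{A}$, the Hamming weight is $\mathrm{wt_H}(f)=\#\{a\in\mathcal{A}: f(a)\ne0\}$. *)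

theory Defs
  imports "HOL-Computational_Algebra.Polynomial"
begin

text \<open>Skew polynomials over a division ring 'a, represented by their coefficient
  sequences (left coefficients: F = sum f_i x^i), with skew multiplication
  determined by x a = sigma(a) x + delta(a).\<close>

definition ring_endo :: "('a::division_ring \<Rightarrow> 'a) \<Rightarrow> bool" where
  "ring_endo \<sigma> \<longleftrightarrow> (\<forall>a b. \<sigma> (a + b) = \<sigma> a + \<sigma> b) \<and>
     (\<forall>a b. \<sigma> (a * b) = \<sigma> a * \<sigma> b) \<and> \<sigma> 1 = 1"

definition sigma_derivation :: "('a::division_ring \<Rightarrow> 'a) \<Rightarrow> ('a \<Rightarrow> 'a) \<Rightarrow> bool" where
  "sigma_derivation \<sigma> \<delta> \<longleftrightarrow> (\<forall>a b. \<delta> (a + b) = \<delta> a + \<delta> b) \<and>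
     (\<forall>a b. \<delta> (a * b) = \<sigma> a * \<delta> b + \<delta> a * b)"

text \<open>Left multiplication by x: x (sum h_i x^i) = sum (sigma(h_i) x^(i+1) + delta(h_i) x^i).\<close>
definition skew_xmul :: "('a::division_ring \<Rightarrow> 'a) \<Rightarrow> ('a \<Rightarrow> 'a) \<Rightarrow> 'a poly \<Rightarrow> 'a poly" where
  "skew_xmul \<sigma> \<delta> H = pCons 0 (map_poly \<sigma> H) + map_poly \<delta> H"

definition lscale :: "'a::division_ring \<Rightarrow> 'a poly \<Rightarrow> 'a poly" where
  "lscale a H = map_poly (\<lambda>c. a * c) H"

definition skew_mult :: "('a::division_ring \<Rightarrow> 'a) \<Rightarrow> ('a \<Rightarrow> 'a) \<Rightarrow> 'a poly \<Rightarrow> 'a poly \<Rightarrow> 'a poly" where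
  "skew_mult \<sigma> \<delta> F G = (\<Sum>i\<le>degree F. lscale (coeff F i) ((skew_xmul \<sigma> \<delta> ^^ i) G))"

definition skew_eval :: "('a::division_ring \<Rightarrow> 'a) \<Rightarrow> ('a \<Rightarrow> 'a) \<Rightarrow> 'a poly \<Rightarrow> 'a \<Rightarrow> 'a" where
  "skew_eval \<sigma> \<delta> F a = (THE b. \<exists>G. F - [:b:] = skew_mult \<sigma> \<delta> G [:- a, 1:])"

definition skew_polys_lt :: "nat \<Rightarrow> 'a::division_ring poly set" where
  "skew_polys_lt n = {F. \<forall>i\<ge>n. coeff F i = 0}"

definition zeros_of :: "('a::division_ring \<Rightarrow> 'a) \<Rightarrow> ('a \<Rightarrow> 'a) \<Rightarrow> 'a poly set \<Rightarrow> 'a set" where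
  "zeros_of \<sigma> \<delta> A = {a. \<forall>F\<in>A. skew_eval \<sigma> \<delta> F a = 0}"

definition vanishing_ideal :: "('a::division_ring \<Rightarrow> 'a) \<Rightarrow> ('a \<Rightarrow> 'a) \<Rightarrow> 'a set \<Rightarrow> 'a poly set" where
  "vanishing_ideal \<sigma> \<delta> \<Omega> = {F. \<forall>a\<in>\<Omega>. skew_eval \<sigma> \<delta> F a = 0}"

definition P_closure :: "('a::division_ring \<Rightarrow> 'a) \<Rightarrow> ('a \<Rightarrow> 'a) \<Rightarrow> 'a set \<Rightarrow> 'a set" where
  "P_closure \<sigma> \<delta> \<Omega> = zeros_of \<sigma> \<delta> (vanishing_ideal \<sigma> \<delta> \<Omega>)"

definition P_closed :: "('a::division_ring \<Rightarrow> 'a) \<Rightarrow> ('a \<Rightarrow> 'a) \<Rightarrow> 'a set \<Rightarrow> bool" where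
  "P_closed \<sigma> \<delta> \<Omega> \<longleftrightarrow> P_closure \<sigma> \<delta> \<Omega> = \<Omega>"

definition P_independent :: "('a::division_ring \<Rightarrow> 'a) \<Rightarrow> ('a \<Rightarrow> 'a) \<Rightarrow> 'a set \<Rightarrow> bool" where
  "P_independent \<sigma> \<delta> \<Omega> \<longleftrightarrow> (\<forall>a\<in>\<Omega>. a \<notin> P_closure \<sigma> \<delta> (\<Omega> - {a}))"

definition P_basis :: "('a::division_ring \<Rightarrow> 'a) \<Rightarrow> ('a \<Rightarrow> 'a) \<Rightarrow> 'a set \<Rightarrow> 'a set \<Rightarrow> bool" where
  "P_basis \<sigma> \<delta> B \<Omega> \<longleftrightarrow> B \<subseteq> \<Omega> \<and> P_independent \<sigma> \<delta> B \<and> P_closure \<sigma> \<delta> B = \<Omega>"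

text \<open>Rk(Omega) = degree of the monic minimal-degree element F_Omega of I(Omega),
  i.e. the least degree of a nonzero polynomial vanishing on Omega.\<close>
definition P_rank :: "('a::division_ring \<Rightarrow> 'a) \<Rightarrow> ('a \<Rightarrow> 'a) \<Rightarrow> 'a set \<Rightarrow> nat" where
  "P_rank \<sigma> \<delta> \<Omega> = (LEAST d. \<exists>F\<in>vanishing_ideal \<sigma> \<delta> \<Omega>. F \<noteq> 0 \<and> degree F = d)"

definition skew_weight :: "('a::division_ring \<Rightarrow> 'a) \<Rightarrow> ('a \<Rightarrow> 'a) \<Rightarrow> 'a set \<Rightarrow> 'a poly \<Rightarrow> nat" where
  "skew_weight \<sigma> \<delta> \<Omega> F = P_rank \<sigma> \<delta> \<Omega> - P_rank \<sigma> \<delta> (zeros_of \<sigma> \<delta> {F} \<inter> \<Omega>)"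

definition hamming_eval :: "('a::division_ring \<Rightarrow> 'a) \<Rightarrow> ('a \<Rightarrow> 'a) \<Rightarrow> 'a set \<Rightarrow> 'a poly \<Rightarrow> nat" where
  "hamming_eval \<sigma> \<delta> A F = card {a\<in>A. skew_eval \<sigma> \<delta> F a \<noteq> 0}"

end

theory Submission
  imports Defs
begin

text \<open>
  Every P-independent subset of \<open>\<Omega>\<close> extends to a P-basis, and all P-bases of \<open>\<Omega>\<close>
  have \<open>Rk(\<Omega>)\<close> elements. A P-basis \<open>\<A>\<close> meets the zero set \<open>Z(F) \<inter> \<Omega>\<close> in a
  P-independent subset of it, hence in at most \<open>Rk(Z(F) \<inter> \<Omega>)\<close> points, so
  \<open>wt\<^sub>H(E\<^sub>\<A>(F)) \<ge> Rk(\<Omega>) - Rk(Z(F) \<inter> \<Omega>) = wt\<^sub>\<Omega>(F)\<close>. Conversely, extending a P-basis of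
  the P-closure of \<open>Z(F) \<inter> \<Omega>\<close> inside \<open>Z(F) \<inter> \<Omega>\<close> to a P-basis of \<open>\<Omega>\<close> gives a basis with
  exactly \<open>Rk(Z(F) \<inter> \<Omega>)\<close> zeros of \<open>F\<close>, which attains the bound.
  The rank facts rest on the right division algorithm by \<open>x - a\<close> and by an arbitrary
  nonzero polynomial, which needs \<open>\<sigma>\<close> to be injective; this holds since \<open>\<sigma>\<close> is a ring
  endomorphism of a division ring.
\<close>

context
  fixes \<sigma> \<delta> :: "'a::division_ring \<Rightarrow> 'a"
  assumes endo: "ring_endo \<sigma>" and der: "sigma_derivation \<sigma> \<delta>"
begin

lemma sigma_add: "\<sigma> (a + b) = \<sigma> a + \<sigma> b"
  using endo by (simp add: ring_endo_def)

lemma sigma_mult: "\<sigma> (a * b) = \<sigma> a * \<sigma> b"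
  using endo by (simp add: ring_endo_def)

lemma sigma_one: "\<sigma> 1 = 1"
  using endo by (simp add: ring_endo_def)

lemma sigma_zero: "\<sigma> 0 = 0"
  using sigma_add[of 0 0] by simp

lemma delta_add: "\<delta> (a + b) = \<delta> a + \<delta> b"
  using der by (simp add: sigma_derivation_def)

lemma delta_mult: "\<delta> (a * b) = \<sigma> a * \<delta> b + \<delta> a * b"
  using der by (simp add: sigma_derivation_def)

lemma delta_zero: "\<delta> 0 = 0"
  using delta_add[of 0 0] by simp

lemma sigma_nonzero:
  assumes "a \<noteq> 0"
  shows "\<sigma> a \<noteq> 0"
proof
  assume "\<sigma> a = 0"
  have "\<sigma> a * \<sigma> (inverse a) = 1"
    using assms by (simp add: sigma_one flip: sigma_mult)
  with \<open>\<sigma> a = 0\<close> show False by simp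
qed

lemma sigma_pow_nonzero: "a \<noteq> 0 \<Longrightarrow> (\<sigma> ^^ k) a \<noteq> 0"
  by (induction k) (auto simp: sigma_nonzero)

lemma sigma_pow_one: "(\<sigma> ^^ k) 1 = 1"
  by (induction k) (auto simp: sigma_one)

subsection \<open>Skew multiplication\<close>

abbreviation xmul where "xmul \<equiv> skew_xmul \<sigma> \<delta>"
abbreviation smul where "smul \<equiv> skew_mult \<sigma> \<delta>"

lemma coeff_lscale: "coeff (lscale c H) i = c * coeff H i"
  unfolding lscale_def by (simp add: coeff_map_poly)

lemma coeff_xmul: "coeff (xmul H) i = (if i = 0 then 0 else \<sigma> (coeff H (i - 1))) + \<delta> (coeff H i)"
  unfolding skew_xmul_def by (cases i) (auto simp: coeff_map_poly sigma_zero delta_zero)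

lemma lscale_add: "lscale c (A + B) = lscale c A + lscale c B"
  by (simp add: poly_eq_iff coeff_lscale algebra_simps)

lemma lscale_diff: "lscale c (A - B) = lscale c A - lscale c B"
  by (simp add: poly_eq_iff coeff_lscale algebra_simps)

lemma lscale_add_left: "lscale (a + b) A = lscale a A + lscale b A"
  by (simp add: poly_eq_iff coeff_lscale algebra_simps)

lemma lscale_0_left [simp]: "lscale 0 A = 0"
  by (simp add: poly_eq_iff coeff_lscale)

lemma lscale_0_right [simp]: "lscale c 0 = 0"
  by (simp add: poly_eq_iff coeff_lscale)

lemma lscale_lscale: "lscale c (lscale d A) = lscale (c * d) A"
  by (simp add: poly_eq_iff coeff_lscale algebra_simps)

lemma lscale_const: "lscale c [:b:] = [:c * b:]"
  by (simp add: poly_eq_iff coeff_lscale coeff_pCons split: nat.split)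

lemma lscale_sum: "lscale c (\<Sum>i<(N::nat). f i) = (\<Sum>i<N. lscale c (f i))"
  by (induction N) (auto simp: lscale_add)

lemma degree_lscale_le: "degree (lscale c G) \<le> degree G"
  by (rule degree_le) (simp add: coeff_lscale coeff_eq_0)

lemma xmul_add: "xmul (A + B) = xmul A + xmul B"
  by (simp add: poly_eq_iff coeff_xmul sigma_add delta_add algebra_simps)

lemma xmul_0 [simp]: "xmul 0 = 0"
  by (simp add: poly_eq_iff coeff_xmul sigma_zero delta_zero)

lemma xmul_sum: "xmul (\<Sum>i<(N::nat). f i) = (\<Sum>i<N. xmul (f i))"
  by (induction N) (simp_all add: xmul_add)

lemma xmul_lscale: "xmul (lscale c H) = lscale (\<sigma> c) (xmul H) + lscale (\<delta> c) H"
  by (simp add: poly_eq_iff coeff_xmul coeff_lscale sigma_mult delta_mult algebra_simps)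

lemma skew_polys_lt_Suc_iff: "H \<in> skew_polys_lt (Suc k) \<longleftrightarrow> degree H \<le> k"
  unfolding skew_polys_lt_def
  by (auto intro: degree_le coeff_eq_0)

lemma skew_polys_lt_Suc_degree: "H \<in> skew_polys_lt (Suc (degree H))"
  by (simp add: skew_polys_lt_Suc_iff)

lemma skew_polys_lt_mono: "H \<in> skew_polys_lt m \<Longrightarrow> m \<le> k \<Longrightarrow> H \<in> skew_polys_lt k"
  unfolding skew_polys_lt_def by auto

lemma xmul_pow_skew_polys_lt:
  assumes "H \<in> skew_polys_lt (Suc m)"
  shows "(xmul ^^ k) H \<in> skew_polys_lt (Suc (m + k)) \<and> coeff ((xmul ^^ k) H) (m + k) = (\<sigma> ^^ k) (coeff H m)"
proof (induction k)
  case (Suc k)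
  then show ?case
    unfolding skew_polys_lt_def by (auto simp: coeff_xmul sigma_zero delta_zero)
qed (use assms in simp)

lemma xmul_skew_polys_lt:
  "H \<in> skew_polys_lt (Suc m) \<Longrightarrow> xmul H \<in> skew_polys_lt (Suc (Suc m)) \<and> coeff (xmul H) (Suc m) = \<sigma> (coeff H m)"
  using xmul_pow_skew_polys_lt[of H m 1] by simp

lemma smul_eq_sum:
  assumes "degree G < N"
  shows "smul G H = (\<Sum>i<N. lscale (coeff G i) ((xmul ^^ i) H))"
proof -
  have "(\<Sum>i<N. lscale (coeff G i) ((xmul ^^ i) H))
      = (\<Sum>i\<in>{..degree G}. lscale (coeff G i) ((xmul ^^ i) H))"
    using assms by (intro sum.mono_neutral_right) (auto simp: coeff_eq_0)
  then show ?thesis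
    unfolding skew_mult_def by simp
qed

lemma smul_0_left [simp]: "smul 0 H = 0"
  by (simp add: skew_mult_def)

lemma smul_add_left: "smul (G1 + G2) H = smul G1 H + smul G2 H"
proof -
  define N where "N = Suc (max (degree G1) (degree G2))"
  have "degree (G1 + G2) < N" "degree G1 < N" "degree G2 < N"
    using degree_add_le_max[of G1 G2] by (auto simp: N_def)
  then show ?thesis
    by (simp add: smul_eq_sum[of _ N] lscale_add_left sum.distrib)
qed

lemma smul_diff_left: "smul (G1 - G2) H = smul G1 H - smul G2 H"
  using smul_add_left[of "G1 - G2" G2 H] by simp

lemma smul_lscale_left: "smul (lscale c G) H = lscale c (smul G H)"
proof -
  have d: "degree (lscale c G) < Suc (degree G)"
    using degree_lscale_le[of c G] by simp
  show ?thesis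
    unfolding smul_eq_sum[OF d] smul_eq_sum[of G "Suc (degree G)", OF lessI]
      lscale_sum lscale_lscale coeff_lscale ..
qed

lemma smul_monom_left: "smul (monom c k) H = lscale c ((xmul ^^ k) H)"
proof -
  have "degree (monom c k) < Suc k"
    by (simp add: degree_monom_le le_imp_less_Suc)
  then show ?thesis
    by (simp add: smul_eq_sum[of _ "Suc k"] coeff_monom)
qed

lemma xmul_smul: "xmul (smul G H) = smul (xmul G) H"
proof -
  define N where "N = Suc (degree G)"
  have dG: "degree G < N"
    by (simp add: N_def)
  have "degree (xmul G) < Suc N"
    using xmul_skew_polys_lt[OF skew_polys_lt_Suc_degree[of G]]
    by (simp add: N_def skew_polys_lt_Suc_iff)
  then have "smul (xmul G) H
      = (\<Sum>j<Suc N. lscale (if j = 0 then 0 else \<sigma> (coeff G (j - 1))) ((xmul ^^ j) H))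
      + (\<Sum>j<Suc N. lscale (\<delta> (coeff G j)) ((xmul ^^ j) H))"
    by (simp add: smul_eq_sum coeff_xmul lscale_add_left sum.distrib del: sum.lessThan_Suc)
  also have "(\<Sum>j<Suc N. lscale (if j = 0 then 0 else \<sigma> (coeff G (j - 1))) ((xmul ^^ j) H))
      = (\<Sum>i<N. lscale (\<sigma> (coeff G i)) (xmul ((xmul ^^ i) H)))"
    by (subst sum.lessThan_Suc_shift) simp
  also have "(\<Sum>j<Suc N. lscale (\<delta> (coeff G j)) ((xmul ^^ j) H))
      = (\<Sum>j<N. lscale (\<delta> (coeff G j)) ((xmul ^^ j) H))"
    using dG by (simp add: coeff_eq_0 delta_zero)
  also have "(\<Sum>i<N. lscale (\<sigma> (coeff G i)) (xmul ((xmul ^^ i) H)))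
      + (\<Sum>j<N. lscale (\<delta> (coeff G j)) ((xmul ^^ j) H)) = xmul (smul G H)"
    by (simp add: smul_eq_sum[OF dG] xmul_sum xmul_lscale sum.distrib)
  finally show ?thesis ..
qed

subsection \<open>Evaluation\<close>

abbreviation ev where "ev \<equiv> skew_eval \<sigma> \<delta>"

lemma xmul_pow_linear:
  "(xmul ^^ k) [:- a, 1:] \<in> skew_polys_lt (Suc (Suc k)) \<and> coeff ((xmul ^^ k) [:- a, 1:]) (Suc k) = 1"
  using xmul_pow_skew_polys_lt[of "[:- a, 1:]" 1 k]
  by (simp add: skew_polys_lt_Suc_iff sigma_pow_one)

lemma smul_linear_skew_polys_lt:
  assumes "G \<in> skew_polys_lt (Suc m)"
  shows "smul G [:- a, 1:] \<in> skew_polys_lt (Suc (Suc m)) \<and> coeff (smul G [:- a, 1:]) (Suc m) = coeff G m"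
proof -
  let ?L = "\<lambda>i. (xmul ^^ i) [:- a, 1:]"
  have dG: "degree G < Suc m"
    using assms by (simp add: skew_polys_lt_Suc_iff)
  have c: "coeff (smul G [:- a, 1:]) j = (\<Sum>i<Suc m. coeff G i * coeff (?L i) j)" for j
    unfolding smul_eq_sum[OF dG] coeff_sum coeff_lscale ..
  have L_zero: "coeff (?L i) j = 0" if "Suc (Suc i) \<le> j" for i j
    using xmul_pow_linear[of i a] that unfolding skew_polys_lt_def by blast
  have "coeff (smul G [:- a, 1:]) j = 0" if "j \<ge> Suc (Suc m)" for j
    unfolding c using that by (intro sum.neutral) (auto intro!: L_zero)
  moreover have "coeff (smul G [:- a, 1:]) (Suc m) = coeff G m"
    unfolding c using xmul_pow_linear[of m a] by (simp add: L_zero)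
  ultimately show ?thesis
    unfolding skew_polys_lt_def by auto
qed

lemma smul_linear_eq_const:
  assumes "smul G [:- a, 1:] = [:c:]"
  shows "c = 0"
proof (cases "G = 0")
  case False
  then have "coeff (smul G [:- a, 1:]) (Suc (degree G)) \<noteq> 0"
    using smul_linear_skew_polys_lt[OF skew_polys_lt_Suc_degree[of G]] by simp
  with assms show ?thesis by simp
qed (use assms in simp)

lemma right_division_by_linear: "\<exists>b G. F - [:b:] = smul G [:- a, 1:]"
proof -
  have "\<exists>b G. F - [:b:] = smul G [:- a, 1:]" if "F \<in> skew_polys_lt (Suc N)" for F N
    using that
  proof (induction N arbitrary: F)
    case 0
    then have "F = [:coeff F 0:]"
      unfolding skew_polys_lt_def by (auto simp: poly_eq_iff coeff_pCons split: nat.split)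
    then have "F - [:coeff F 0:] = smul 0 [:- a, 1:]" by simp
    then show ?case by blast
  next
    case (Suc N)
    define f where "f = coeff F (Suc N)"
    define F' where "F' = F - lscale f ((xmul ^^ N) [:- a, 1:])"
    have "coeff F' i = 0" if "i \<ge> Suc N" for i
      using that Suc.prems xmul_pow_linear[of N a] unfolding skew_polys_lt_def
      by (cases "i = Suc N") (auto simp: F'_def f_def coeff_lscale)
    then have "F' \<in> skew_polys_lt (Suc N)"
      unfolding skew_polys_lt_def by blast
    with Suc.IH obtain b G where "F' - [:b:] = smul G [:- a, 1:]" by blast
    then have "F - [:b:] = smul (G + monom f N) [:- a, 1:]"
      by (simp add: F'_def smul_add_left smul_monom_left algebra_simps)
    then show ?case by blast
  qed
  then show ?thesis
    using skew_polys_lt_Suc_degree by blast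
qed

lemma skew_eval_eqI:
  assumes "F - [:b:] = smul G [:- a, 1:]"
  shows "ev F a = b"
  unfolding skew_eval_def
proof (rule the_equality)
  fix b' assume "\<exists>G. F - [:b':] = smul G [:- a, 1:]"
  then obtain G' where G': "F - [:b':] = smul G' [:- a, 1:]" by blast
  have "smul (G' - G) [:- a, 1:] = (F - [:b':]) - (F - [:b:])"
    by (simp add: smul_diff_left assms G')
  also have "\<dots> = [:b - b':]"
    by simp
  finally show "b' = b"
    using smul_linear_eq_const by fastforce
qed (use assms in blast)

lemma skew_eval_remainder: "\<exists>G. F - [:ev F a:] = smul G [:- a, 1:]"
  using right_division_by_linear[of F a] skew_eval_eqI by metis

lemma skew_eval_const [simp]: "ev [:b:] a = b"
  by (rule skew_eval_eqI[of _ _ 0]) simp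

lemma skew_eval_0 [simp]: "ev 0 a = 0"
  using skew_eval_const[of 0 a] by simp

lemma skew_eval_add: "ev (F1 + F2) a = ev F1 a + ev F2 a"
proof -
  obtain G1 G2 where "F1 - [:ev F1 a:] = smul G1 [:- a, 1:]" "F2 - [:ev F2 a:] = smul G2 [:- a, 1:]"
    using skew_eval_remainder by blast
  moreover have "(F1 + F2) - [:ev F1 a + ev F2 a:] = (F1 - [:ev F1 a:]) + (F2 - [:ev F2 a:])"
    using add_diff_add[of F1 F2 "[:ev F1 a:]" "[:ev F2 a:]"] by simp
  ultimately have "(F1 + F2) - [:ev F1 a + ev F2 a:] = smul (G1 + G2) [:- a, 1:]"
    by (simp add: smul_add_left)
  then show ?thesis
    by (rule skew_eval_eqI)
qed

lemma skew_eval_diff: "ev (F1 - F2) a = ev F1 a - ev F2 a"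
  using skew_eval_add[of "F1 - F2" F2 a] by simp

lemma skew_eval_lscale: "ev (lscale c F) a = c * ev F a"
proof -
  obtain G where "F - [:ev F a:] = smul G [:- a, 1:]"
    using skew_eval_remainder by blast
  then have "lscale c F - [:c * ev F a:] = smul (lscale c G) [:- a, 1:]"
    by (simp add: smul_lscale_left flip: lscale_const lscale_diff)
  then show ?thesis
    by (rule skew_eval_eqI)
qed

lemma skew_eval_xmul_eq_0:
  assumes "ev F a = 0"
  shows "ev (xmul F) a = 0"
proof -
  obtain G where "F - [:ev F a:] = smul G [:- a, 1:]"
    using skew_eval_remainder by blast
  then have "xmul F - [:0:] = smul (xmul G) [:- a, 1:]"
    using assms by (simp flip: xmul_smul)
  then show ?thesis
    by (rule skew_eval_eqI)
qed

lemma skew_eval_xmul_pow_eq_0: "ev F a = 0 \<Longrightarrow> ev ((xmul ^^ k) F) a = 0"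
  by (induction k) (auto simp: skew_eval_xmul_eq_0)

lemma cancel_top_coeff:
  assumes "G \<noteq> 0" and "H \<in> skew_polys_lt (Suc (degree G + k))"
  obtains c where "H - lscale c ((xmul ^^ k) G) \<in> skew_polys_lt (degree G + k)"
proof -
  define s where "s = (\<sigma> ^^ k) (lead_coeff G)"
  define c where "c = coeff H (degree G + k) * inverse s"
  have "s \<noteq> 0"
    using assms(1) by (simp add: s_def sigma_pow_nonzero)
  have "(xmul ^^ k) G \<in> skew_polys_lt (Suc (degree G + k))" "coeff ((xmul ^^ k) G) (degree G + k) = s"
    using xmul_pow_skew_polys_lt[OF skew_polys_lt_Suc_degree[of G], of k] by (auto simp: s_def)
  then have "coeff (H - lscale c ((xmul ^^ k) G)) i = 0" if "i \<ge> degree G + k" for i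
    using that \<open>s \<noteq> 0\<close> assms(2) unfolding skew_polys_lt_def
    by (cases "i = degree G + k") (auto simp: c_def coeff_lscale mult.assoc)
  then show thesis
    using that unfolding skew_polys_lt_def by blast
qed

lemma exists_remainder_agreeing_on_zeros:
  assumes "G \<noteq> 0"
  obtains R where "R \<in> skew_polys_lt (degree G)" "\<And>p. ev G p = 0 \<Longrightarrow> ev H p = ev R p"
proof -
  have "\<exists>R. R \<in> skew_polys_lt (degree G) \<and> (\<forall>p. ev G p = 0 \<longrightarrow> ev H p = ev R p)"
    if "H \<in> skew_polys_lt N" for H N
    using that
  proof (induction N arbitrary: H)
    case 0
    then show ?case
      using skew_polys_lt_mono[of H 0 "degree G"] by auto
  next
    case (Suc M)
    show ?case
    proof (cases "Suc M \<le> degree G")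
      case True
      then show ?thesis
        using skew_polys_lt_mono[OF Suc.prems] by auto
    next
      case False
      then obtain k where M: "M = degree G + k"
        using le_Suc_ex by (metis not_less_eq_eq)
      obtain c where "H - lscale c ((xmul ^^ k) G) \<in> skew_polys_lt M"
        using cancel_top_coeff[OF assms] Suc.prems M by blast
      with Suc.IH obtain R where
        "R \<in> skew_polys_lt (degree G)" "\<forall>p. ev G p = 0 \<longrightarrow> ev (H - lscale c ((xmul ^^ k) G)) p = ev R p"
        by blast
      then show ?thesis
        by (auto simp: skew_eval_diff skew_eval_lscale skew_eval_xmul_pow_eq_0)
    qed
  qed
  then show ?thesis
    using that skew_polys_lt_Suc_degree by blast
qed

subsection \<open>P-closure, P-independence and rank\<close>

abbreviation I where "I \<equiv> vanishing_ideal \<sigma> \<delta>"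
abbreviation cl where "cl \<equiv> P_closure \<sigma> \<delta>"
abbreviation rk where "rk \<equiv> P_rank \<sigma> \<delta>"
abbreviation indep where "indep \<equiv> P_independent \<sigma> \<delta>"

lemma vanishing_ideal_iff: "F \<in> I S \<longleftrightarrow> (\<forall>a\<in>S. ev F a = 0)"
  by (simp add: vanishing_ideal_def)

lemma P_closure_iff: "a \<in> cl S \<longleftrightarrow> (\<forall>F\<in>I S. ev F a = 0)"
  by (simp add: P_closure_def zeros_of_def)

lemma subset_P_closure: "S \<subseteq> cl S"
  by (auto simp: P_closure_iff vanishing_ideal_iff)

lemma vanishing_ideal_antimono: "S \<subseteq> T \<Longrightarrow> I T \<subseteq> I S"
  unfolding vanishing_ideal_def by blast

lemma P_closure_mono: "S \<subseteq> T \<Longrightarrow> cl S \<subseteq> cl T"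
  by (meson vanishing_ideal_antimono P_closure_iff subset_iff)

lemma vanishing_ideal_P_closure: "I (cl S) = I S"
  using subset_P_closure[of S] by (auto simp: P_closure_iff vanishing_ideal_iff)

lemma P_rank_le_degree: "G \<in> I S \<Longrightarrow> G \<noteq> 0 \<Longrightarrow> rk S \<le> degree G"
  unfolding P_rank_def by (rule Least_le) blast

lemma P_rank_witness:
  "G \<in> I S \<Longrightarrow> G \<noteq> 0 \<Longrightarrow> \<exists>G'\<in>I S. G' \<noteq> 0 \<and> degree G' = rk S"
  unfolding P_rank_def by (rule LeastI[of _ "degree G"]) blast

text \<open>For \<open>t \<notin> Z(G)\<close>, the polynomial \<open>x G - \<alpha> G\<close> with \<open>\<alpha> = (xG)(t) G(t)\<^sup>-\<^sup>1\<close> also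
  vanishes at \<open>t\<close>.\<close>

lemma exists_vanishing_poly:
  assumes "finite S"
  shows "\<exists>G\<in>I S. G \<noteq> 0 \<and> degree G \<le> card S"
  using assms
proof (induction S rule: finite_induct)
  case empty
  have "[:1:] \<in> I {}"
    by (simp add: vanishing_ideal_iff)
  then show ?case
    by (intro bexI[of _ "[:1:]"]) simp_all
next
  case (insert t S)
  then obtain G where G: "G \<in> I S" "G \<noteq> 0" "degree G \<le> card S"
    by blast
  show ?case
  proof (cases "ev G t = 0")
    case True
    then show ?thesis
      using G insert by (auto simp: vanishing_ideal_iff)
  next
    case False
    define G' where "G' = xmul G - lscale (ev (xmul G) t * inverse (ev G t)) G"
    have XG: "xmul G \<in> skew_polys_lt (Suc (Suc (degree G)))"
      "coeff (xmul G) (Suc (degree G)) = \<sigma> (lead_coeff G)"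
      using xmul_skew_polys_lt[OF skew_polys_lt_Suc_degree[of G]] by auto
    have "coeff G' (Suc (degree G)) \<noteq> 0"
      using XG G(2) sigma_nonzero by (simp add: G'_def coeff_lscale coeff_eq_0)
    then have "G' \<noteq> 0"
      by auto
    have "G' \<in> skew_polys_lt (Suc (Suc (degree G)))"
      using XG skew_polys_lt_Suc_degree[of G] unfolding skew_polys_lt_def
      by (auto simp: G'_def coeff_lscale)
    then have "degree G' \<le> card (insert t S)"
      using G(3) insert(1,2) by (simp add: skew_polys_lt_Suc_iff)
    moreover have "G' \<in> I (insert t S)"
      using False G(1)
      by (auto simp: vanishing_ideal_iff G'_def skew_eval_diff skew_eval_lscale skew_eval_xmul_eq_0 mult.assoc)
    ultimately show ?thesis
      using \<open>G' \<noteq> 0\<close> by blast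
  qed
qed

lemma P_rank_le_card: "finite S \<Longrightarrow> rk S \<le> card S"
  using exists_vanishing_poly P_rank_le_degree by fastforce

lemma P_rank_witness_finite: "finite S \<Longrightarrow> \<exists>G\<in>I S. G \<noteq> 0 \<and> degree G = rk S"
  using exists_vanishing_poly P_rank_witness by blast

text \<open>If the rank did not grow, a minimal vanishing polynomial \<open>G\<close> of \<open>insert t S\<close> would be
  one of \<open>S\<close>; the remainder modulo \<open>G\<close> of any \<open>H \<in> I(S)\<close> lies in \<open>I(S)\<close> and has degree
  below \<open>Rk(S)\<close>, so it is \<open>0\<close>, whence \<open>H(t) = 0\<close>.\<close>

lemma P_rank_insert_less:
  assumes "finite S" and "t \<notin> cl S"
  shows "rk S < rk (insert t S)"
proof (rule ccontr)
  assume "\<not> rk S < rk (insert t S)"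
  obtain G where G: "G \<in> I (insert t S)" "G \<noteq> 0" "degree G = rk (insert t S)"
    using P_rank_witness_finite[OF finite.insertI[OF assms(1)]] by blast
  have "G \<in> I S"
    using G(1) vanishing_ideal_antimono[of S "insert t S"] by blast
  then have "rk S \<le> degree G"
    using G(2) by (rule P_rank_le_degree)
  with G(3) \<open>\<not> rk S < rk (insert t S)\<close> have deg: "degree G = rk S"
    by simp
  obtain H where H: "H \<in> I S" "ev H t \<noteq> 0"
    using assms(2) by (auto simp: P_closure_iff)
  obtain R where R: "R \<in> skew_polys_lt (degree G)" "\<And>p. ev G p = 0 \<Longrightarrow> ev H p = ev R p"
    using exists_remainder_agreeing_on_zeros[OF G(2)] by blast
  have "R \<in> I S"
    using R(2) H(1) \<open>G \<in> I S\<close> by (auto simp: vanishing_ideal_iff)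
  have "R = 0"
  proof (rule ccontr)
    assume "R \<noteq> 0"
    then have "coeff R (degree R) \<noteq> 0"
      by simp
    then have "\<not> degree G \<le> degree R"
      using R(1) unfolding skew_polys_lt_def by blast
    moreover have "rk S \<le> degree R"
      using \<open>R \<in> I S\<close> \<open>R \<noteq> 0\<close> P_rank_le_degree by blast
    ultimately show False
      using deg by linarith
  qed
  then show False
    using G(1) H(2) R(2) by (simp add: vanishing_ideal_iff)
qed

lemma P_independent_subset: "indep S \<Longrightarrow> T \<subseteq> S \<Longrightarrow> indep T"
  unfolding P_independent_def using P_closure_mono by (metis Diff_mono subset_iff order_refl)

lemma P_rank_P_independent: "finite S \<Longrightarrow> indep S \<Longrightarrow> rk S = card S"
proof (induction S rule: finite_induct)
  case empty
  then show ?case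
    using P_rank_le_card[of "{}"] by simp
next
  case (insert t S)
  have "t \<notin> cl S"
    using insert(2,4) unfolding P_independent_def by auto
  then have "rk S < rk (insert t S)"
    using P_rank_insert_less insert(1) by blast
  moreover have "rk S = card S"
    using insert P_independent_subset by blast
  moreover have "rk (insert t S) \<le> card (insert t S)"
    using P_rank_le_card insert by blast
  ultimately show ?case
    using insert by simp
qed

lemma P_independent_if_P_rank_eq_card:
  assumes "finite S" and "rk S = card S"
  shows "indep S"
  unfolding P_independent_def
proof
  fix a assume "a \<in> S"
  show "a \<notin> cl (S - {a})"
  proof
    assume "a \<in> cl (S - {a})"
    then have "S \<subseteq> cl (S - {a})"
      using subset_P_closure[of "S - {a}"] by auto
    then have sub: "I (S - {a}) \<subseteq> I S"
      using vanishing_ideal_antimono vanishing_ideal_P_closure by metis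
    obtain G where G: "G \<in> I (S - {a})" "G \<noteq> 0" "degree G = rk (S - {a})"
      using P_rank_witness_finite assms(1) by blast
    have "rk S \<le> rk (S - {a})"
      using P_rank_le_degree[of G S] G sub by auto
    also have "\<dots> \<le> card (S - {a})"
      using P_rank_le_card assms(1) by blast
    also have "\<dots> < card S"
      using assms(1) \<open>a \<in> S\<close> by (rule card_Diff1_less)
    finally show False
      using assms(2) by simp
  qed
qed

lemma P_independent_insert:
  assumes "finite C" and "indep C" and "t \<notin> cl C"
  shows "indep (insert t C)"
proof -
  have "t \<notin> C"
    using assms(3) subset_P_closure by blast
  have "rk C < rk (insert t C)"
    using P_rank_insert_less assms by blast
  moreover have "rk (insert t C) \<le> card (insert t C)"
    using P_rank_le_card assms by blast
  ultimately have "rk (insert t C) = card (insert t C)"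
    using P_rank_P_independent[OF assms(1,2)] \<open>t \<notin> C\<close> assms(1) by simp
  then show ?thesis
    using P_independent_if_P_rank_eq_card assms(1) by blast
qed

subsection \<open>P-bases\<close>

lemma P_independent_finite_card_le:
  assumes "G \<in> I \<Omega>" "G \<noteq> 0" "C \<subseteq> \<Omega>" "indep C"
  shows "finite C \<and> card C \<le> degree G"
proof -
  have bound: "card D \<le> degree G" if "finite D" "D \<subseteq> C" for D
  proof -
    have "G \<in> I D"
      using assms(1,3) that(2) vanishing_ideal_antimono by blast
    then have "rk D \<le> degree G"
      using assms(2) by (rule P_rank_le_degree)
    then show ?thesis
      using P_rank_P_independent[OF that(1) P_independent_subset[OF assms(4) that(2)]] by simp
  qed
  have "finite C"
  proof (rule ccontr)
    assume "infinite C"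
    then obtain D where "finite D" "card D = Suc (degree G)" "D \<subseteq> C"
      using infinite_arbitrarily_large by blast
    with bound show False
      by fastforce
  qed
  with bound show ?thesis
    by blast
qed

text \<open>A P-independent subset of \<open>K\<close> of maximal size spans \<open>K\<close>.\<close>

lemma exists_P_independent_spanning:
  assumes "G \<in> I K" "G \<noteq> 0" "C\<^sub>0 \<subseteq> K" "indep C\<^sub>0"
  obtains C where "C\<^sub>0 \<subseteq> C" "C \<subseteq> K" "indep C" "K \<subseteq> cl C"
proof -
  let ?P = "\<lambda>C. C\<^sub>0 \<subseteq> C \<and> C \<subseteq> K \<and> indep C"
  have "card C < Suc (degree G)" if "?P C" for C
    using P_independent_finite_card_le[OF assms(1,2), of C] that by auto
  then obtain C where C: "?P C" "\<forall>D. ?P D \<longrightarrow> card D \<le> card C"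
    using ex_has_greatest_nat[of ?P C\<^sub>0 card "Suc (degree G)"] assms(3,4) by blast
  have "finite C"
    using P_independent_finite_card_le[OF assms(1,2), of C] C(1) by blast
  have "K \<subseteq> cl C"
  proof
    fix t assume "t \<in> K"
    show "t \<in> cl C"
    proof (rule ccontr)
      assume "t \<notin> cl C"
      then have "t \<notin> C"
        using subset_P_closure[of C] by blast
      have "?P (insert t C)"
        using C(1) \<open>t \<in> K\<close> P_independent_insert[OF \<open>finite C\<close> _ \<open>t \<notin> cl C\<close>] by blast
      then have "card (insert t C) \<le> card C"
        using C(2) by blast
      then show False
        using \<open>finite C\<close> \<open>t \<notin> C\<close> by simp
    qed
  qed
  with C(1) that show thesis
    by blast
qed

lemma vanishing_poly_if_finite_P_basis:
  assumes "P_basis \<sigma> \<delta> B \<Omega>" "finite B"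
  obtains G where "G \<in> I \<Omega>" "G \<noteq> 0" "degree G = rk \<Omega>"
proof -
  have "I \<Omega> = I B"
    using assms(1) vanishing_ideal_P_closure[of B] unfolding P_basis_def by simp
  moreover have "rk \<Omega> = rk B"
    unfolding P_rank_def calculation ..
  ultimately show thesis
    using that P_rank_witness_finite[OF assms(2)] by auto
qed

lemma P_basis_card:
  assumes "P_basis \<sigma> \<delta> B \<Omega>" "finite B" "P_basis \<sigma> \<delta> A \<Omega>"
  shows "finite A \<and> card A = rk \<Omega>"
proof -
  obtain G where "G \<in> I \<Omega>" "G \<noteq> 0"
    using vanishing_poly_if_finite_P_basis[OF assms(1,2)] by blast
  then have "finite A"
    using P_independent_finite_card_le assms(3) unfolding P_basis_def by blast
  moreover have "I A = I \<Omega>"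
    using assms(3) vanishing_ideal_P_closure unfolding P_basis_def by metis
  then have "rk A = rk \<Omega>"
    by (simp add: P_rank_def)
  ultimately show ?thesis
    using P_rank_P_independent assms(3) unfolding P_basis_def by simp
qed

subsection \<open>Skew weight and Hamming weight\<close>

lemma hamming_eval_eq_card_diff:
  "finite A \<Longrightarrow> hamming_eval \<sigma> \<delta> A F = card A - card {a\<in>A. ev F a = 0}"
  unfolding hamming_eval_def
  by (subst card_Diff_subset[symmetric]) (auto intro: arg_cong[where f = card])

lemma mem_zeros_of_singleton: "a \<in> zeros_of \<sigma> \<delta> {F} \<longleftrightarrow> ev F a = 0"
  by (simp add: zeros_of_def)

text \<open>The zeros of \<open>F\<close> in a P-basis form a P-independent subset of \<open>Z(F) \<inter> \<Omega>\<close>.\<close>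

lemma skew_weight_le_hamming_eval:
  assumes "P_basis \<sigma> \<delta> B \<Omega>" "finite B" "P_basis \<sigma> \<delta> A \<Omega>"
  shows "skew_weight \<sigma> \<delta> \<Omega> F \<le> hamming_eval \<sigma> \<delta> A F"
proof -
  define T where "T = zeros_of \<sigma> \<delta> {F} \<inter> \<Omega>"
  define A\<^sub>0 where "A\<^sub>0 = {a\<in>A. ev F a = 0}"
  obtain G where "G \<in> I \<Omega>" "G \<noteq> 0"
    using vanishing_poly_if_finite_P_basis[OF assms(1,2)] by blast
  then have "G \<in> I T"
    using vanishing_ideal_antimono[of T \<Omega>] by (auto simp: T_def)
  then obtain G\<^sub>T where G\<^sub>T: "G\<^sub>T \<in> I T" "G\<^sub>T \<noteq> 0" "degree G\<^sub>T = rk T"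
    using P_rank_witness \<open>G \<noteq> 0\<close> by blast
  have "A\<^sub>0 \<subseteq> T" "indep A\<^sub>0"
    using assms(3) P_independent_subset
    by (auto simp: A\<^sub>0_def T_def P_basis_def mem_zeros_of_singleton)
  then have "card A\<^sub>0 \<le> rk T"
    using P_independent_finite_card_le[OF G\<^sub>T(1,2)] G\<^sub>T(3) by simp
  then show ?thesis
    using P_basis_card[OF assms] hamming_eval_eq_card_diff[of A F]
    by (simp add: skew_weight_def A\<^sub>0_def flip: T_def)
qed

text \<open>Extend a P-basis of the P-closure of \<open>Z(F) \<inter> \<Omega>\<close>, chosen inside \<open>Z(F) \<inter> \<Omega>\<close>, to
  a P-basis of \<open>\<Omega>\<close>.\<close>

lemma exists_P_basis_hamming_eval_eq_skew_weight:
  assumes "P_closed \<sigma> \<delta> \<Omega>" "P_basis \<sigma> \<delta> B \<Omega>" "finite B"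
  obtains A where "P_basis \<sigma> \<delta> A \<Omega>" "hamming_eval \<sigma> \<delta> A F = skew_weight \<sigma> \<delta> \<Omega> F"
proof -
  define T where "T = zeros_of \<sigma> \<delta> {F} \<inter> \<Omega>"
  obtain G where G: "G \<in> I \<Omega>" "G \<noteq> 0"
    using vanishing_poly_if_finite_P_basis[OF assms(2,3)] by blast
  then have "G \<in> I T"
    using vanishing_ideal_antimono[of T \<Omega>] by (auto simp: T_def)
  have "indep {}"
    by (simp add: P_independent_def)
  then obtain C where C: "C \<subseteq> T" "indep C" "T \<subseteq> cl C"
    by (rule exists_P_independent_spanning[OF \<open>G \<in> I T\<close> G(2) empty_subsetI])
  have "C \<subseteq> \<Omega>"
    using C(1) by (simp add: T_def)
  then obtain A where A: "C \<subseteq> A" "A \<subseteq> \<Omega>" "indep A" "\<Omega> \<subseteq> cl A"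
    by (rule exists_P_independent_spanning[OF G _ C(2)])
  have "cl A \<subseteq> \<Omega>"
    using P_closure_mono[OF A(2)] assms(1) by (simp add: P_closed_def)
  with A have basis: "P_basis \<sigma> \<delta> A \<Omega>"
    by (auto simp: P_basis_def)
  have "finite C"
    using P_independent_finite_card_le[OF \<open>G \<in> I T\<close> G(2) C(1,2)] by blast
  then obtain G\<^sub>C where G\<^sub>C: "G\<^sub>C \<in> I C" "G\<^sub>C \<noteq> 0" "degree G\<^sub>C = card C"
    using P_rank_witness_finite[OF \<open>finite C\<close>] P_rank_P_independent[OF \<open>finite C\<close> C(2)] by auto
  have "I C \<subseteq> I T"
    using vanishing_ideal_antimono[OF C(3)] vanishing_ideal_P_closure[of C] by simp
  then have "rk T \<le> card C"
    using P_rank_le_degree[of G\<^sub>C T] G\<^sub>C by auto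
  also have "\<dots> \<le> card {a\<in>A. ev F a = 0}"
    using A(1) C(1) P_basis_card[OF assms(2,3) basis]
    by (intro card_mono) (auto simp: T_def mem_zeros_of_singleton)
  finally have "hamming_eval \<sigma> \<delta> A F \<le> skew_weight \<sigma> \<delta> \<Omega> F"
    using P_basis_card[OF assms(2,3) basis] hamming_eval_eq_card_diff[of A F]
    by (simp add: skew_weight_def flip: T_def)
  with skew_weight_le_hamming_eval[OF assms(2,3) basis, of F] show thesis
    using that[OF basis] by simp
qed

end

theorem mainTheorem3:
  fixes \<sigma> \<delta> :: "'a::division_ring \<Rightarrow> 'a" and \<Omega> B :: "'a set" and F :: "'a poly" and n :: nat
  assumes "ring_endo \<sigma>" and "sigma_derivation \<sigma> \<delta>"
    and "P_closed \<sigma> \<delta> \<Omega>" and "P_basis \<sigma> \<delta> B \<Omega>" and "finite B"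
    and "n = P_rank \<sigma> \<delta> \<Omega>"
    and "F \<in> skew_polys_lt n"
  shows "skew_weight \<sigma> \<delta> \<Omega> F = Min {hamming_eval \<sigma> \<delta> A F | A. P_basis \<sigma> \<delta> A \<Omega>}
     \<and> skew_weight \<sigma> \<delta> \<Omega> F \<le> hamming_eval \<sigma> \<delta> B F"
proof -
  let ?S = "{hamming_eval \<sigma> \<delta> A F | A. P_basis \<sigma> \<delta> A \<Omega>}"
  have lower: "skew_weight \<sigma> \<delta> \<Omega> F \<le> hamming_eval \<sigma> \<delta> A F" if "P_basis \<sigma> \<delta> A \<Omega>" for A
    using skew_weight_le_hamming_eval[OF assms(1,2,4,5) that] .
  obtain A where "P_basis \<sigma> \<delta> A \<Omega>" "hamming_eval \<sigma> \<delta> A F = skew_weight \<sigma> \<delta> \<Omega> F"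
    using exists_P_basis_hamming_eval_eq_skew_weight[OF assms(1-5)] by blast
  then have "skew_weight \<sigma> \<delta> \<Omega> F \<in> ?S"
    by force
  moreover have "?S \<subseteq> {..P_rank \<sigma> \<delta> \<Omega>}"
    using P_basis_card[OF assms(1,2,4,5)] hamming_eval_eq_card_diff[OF assms(1,2)] by fastforce
  then have "finite ?S"
    using finite_subset by blast
  ultimately have "Min ?S = skew_weight \<sigma> \<delta> \<Omega> F"
    using lower by (intro Min_eqI) auto
  then show ?thesis
    using lower[OF assms(4)] by simp
qed

end
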